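(* Let $P$ and $N$ be holomorphic polynomial mappings on $\mathbb{C}^n$ (with values in finite-dimensional spaces) and let $r=\|P\|^2-\|N\|^2$. Then $r\in\mathcal{Q}$ if and only if there exist a holomorphic polynomial mapping $B$, not identically zero, and a linear mapping $L$ such that $I-L^*L$ is non-negative definite and $B\otimes N=L(B\otimes P)$.
   Context: $\mathcal{Q}$ is the set of Hermitian symmetric polynomials $r$ on $\mathbb{C}^n$ for which there are holomorphic polynomial mappings $F,G$, $G\not\equiv 0$, with $r(z,\overline z)=\|F(z)\|^2/\|G(z)\|^2$. For mappings $B$ and $P$ with values in $\mathbb{C}^a$, $\mathbb{C}^b$, $B\otimes P$ denotes the $\mathbb{C}^a\otimes\mathbb{C}^b$-valued mapping $z\mapsto B(z)\otimes P(z)$ (components $B_iP_j$), so $\|B\otimes P\|^2=\|B\|^2\|P\|^2$. *)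

theory Defs
  imports "HOL-Analysis.Analysis"
begin

text \<open>A holomorphic polynomial mapping with values in C^k is represented by its k component
functions F 0, ..., F (k-1), each a holomorphic polynomial.\<close>

definition monom :: "complex^'n \<Rightarrow> nat^'n \<Rightarrow> complex" where
  "monom z \<alpha> = (\<Prod>i\<in>UNIV. (z$i) ^ (\<alpha>$i))"

definition hol_poly :: "(complex^'n \<Rightarrow> complex) \<Rightarrow> bool" where
  "hol_poly f \<longleftrightarrow> (\<exists>A c. finite A \<and> (\<forall>z. f z = (\<Sum>\<alpha>\<in>A. c \<alpha> * monom z \<alpha>)))"

definition hol_poly_map :: "nat \<Rightarrow> (nat \<Rightarrow> complex^'n \<Rightarrow> complex) \<Rightarrow> bool" where
  "hol_poly_map k F \<longleftrightarrow> (\<forall>i<k. hol_poly (F i))"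

definition sqnorm :: "nat \<Rightarrow> (nat \<Rightarrow> complex^'n \<Rightarrow> complex) \<Rightarrow> complex^'n \<Rightarrow> real" where
  "sqnorm k F z = (\<Sum>i<k. (cmod (F i z))\<^sup>2)"

text \<open>Tensor product B (values in C^a) \<otimes> P (values in C^p), with values in C^(a*p);
component index i*p+j corresponds to B_i P_j.\<close>
definition tensor_map :: "nat \<Rightarrow> (nat \<Rightarrow> complex^'n \<Rightarrow> complex) \<Rightarrow>
    (nat \<Rightarrow> complex^'n \<Rightarrow> complex) \<Rightarrow> (nat \<Rightarrow> complex^'n \<Rightarrow> complex)" where
  "tensor_map p B P = (\<lambda>m z. B (m div p) z * P (m mod p) z)"

definition herm_sym_poly :: "(complex^'n \<Rightarrow> real) \<Rightarrow> bool" where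
  "herm_sym_poly r \<longleftrightarrow> (\<exists>A c. finite A \<and> (\<forall>\<alpha> \<beta>. c (\<beta>, \<alpha>) = cnj (c (\<alpha>, \<beta>))) \<and>
      (\<forall>z. complex_of_real (r z) = (\<Sum>(\<alpha>,\<beta>)\<in>A. c (\<alpha>, \<beta>) * monom z \<alpha> * cnj (monom z \<beta>))))"

definition in_Q :: "(complex^'n \<Rightarrow> real) \<Rightarrow> bool" where
  "in_Q r \<longleftrightarrow> herm_sym_poly r \<and>
     (\<exists>k F l G. hol_poly_map k F \<and> hol_poly_map l G \<and> (\<exists>z i. i < l \<and> G i z \<noteq> 0) \<and>
        (\<forall>z. sqnorm l G z \<noteq> 0 \<longrightarrow> r z = sqnorm k F z / sqnorm l G z))"

definition mat_apply :: "nat \<Rightarrow> (nat \<Rightarrow> nat \<Rightarrow> complex) \<Rightarrow> (nat \<Rightarrow> complex) \<Rightarrow> nat \<Rightarrow> complex" where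
  "mat_apply d L v = (\<lambda>i. \<Sum>j<d. L i j * v j)"

definition id_minus_adj_mult :: "nat \<Rightarrow> (nat \<Rightarrow> nat \<Rightarrow> complex) \<Rightarrow> nat \<Rightarrow> nat \<Rightarrow> complex" where
  "id_minus_adj_mult e L = (\<lambda>i j. (if i = j then 1 else 0) - (\<Sum>k<e. cnj (L k i) * L k j))"

definition nonneg_def :: "nat \<Rightarrow> (nat \<Rightarrow> nat \<Rightarrow> complex) \<Rightarrow> bool" where
  "nonneg_def d M \<longleftrightarrow> (\<forall>v::nat \<Rightarrow> complex.
      let q = (\<Sum>i<d. \<Sum>j<d. cnj (v i) * M i j * v j) in Im q = 0 \<and> 0 \<le> Re q)"

end

theory Submission
  imports Defs
begin

text \<open>
  (\<Leftarrow>) The Hermitian form \<open>v \<mapsto> \<parallel>v\<parallel>\<^sup>2 - \<parallel>L v\<parallel>\<^sup>2\<close> is non-negative, hence a sum of squares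
  \<open>\<Sum>\<^sub>k |c\<^sub>k \<cdot> v|\<^sup>2\<close>; evaluated at \<open>v = B \<otimes> P\<close> it equals \<open>\<parallel>B\<parallel>\<^sup>2 r\<close>, so \<open>r = \<parallel>F\<parallel>\<^sup>2 / \<parallel>B\<parallel>\<^sup>2\<close>
  with \<open>F = c (B \<otimes> P)\<close>.

  (\<Rightarrow>) If \<open>r = \<parallel>F\<parallel>\<^sup>2 / \<parallel>G\<parallel>\<^sup>2\<close> off the zero set of \<open>G\<close>, continuity along complex lines gives
  \<open>\<parallel>G \<otimes> P\<parallel>\<^sup>2 = \<parallel>G \<otimes> N\<parallel>\<^sup>2 + \<parallel>F\<parallel>\<^sup>2\<close> everywhere. Each side is the diagonal of a kernel
  \<open>\<langle>A x, A y\<rangle>\<close> that is holomorphic in \<open>x\<close> and antiholomorphic in \<open>y\<close>, so polarization gives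
  \<open>\<langle>A x, A y\<rangle> = \<langle>C x, C y\<rangle> + \<langle>F x, F y\<rangle>\<close> for \<open>A = G \<otimes> P\<close>, \<open>C = G \<otimes> N\<close>. Consequently
  \<open>\<parallel>\<Sum>\<^sub>j \<delta>\<^sub>j C(w\<^sub>j)\<parallel> \<le> \<parallel>\<Sum>\<^sub>j \<delta>\<^sub>j A(w\<^sub>j)\<parallel>\<close>, so \<open>A(w) \<mapsto> C(w)\<close> extends, by zero on the orthogonal
  complement of the span of the values of \<open>A\<close>, to a contraction \<open>L\<close> with \<open>C = L A\<close>.
\<close>

section \<open>Polynomial functions of one complex variable\<close>

definition poly_fun :: "(complex \<Rightarrow> complex) \<Rightarrow> bool" where
  "poly_fun f \<longleftrightarrow> (\<exists>p. \<forall>x. f x = poly p x)"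

lemma poly_fun_const [intro]: "poly_fun (\<lambda>x. c)"
  unfolding poly_fun_def by (rule exI[of _ "[:c:]"]) simp

lemma poly_fun_id [intro]: "poly_fun (\<lambda>x. x)"
  unfolding poly_fun_def by (rule exI[of _ "[:0, 1:]"]) simp

lemma poly_fun_add [intro]: "poly_fun f \<Longrightarrow> poly_fun g \<Longrightarrow> poly_fun (\<lambda>x. f x + g x)"
  unfolding poly_fun_def by (metis poly_add)

lemma poly_fun_diff [intro]: "poly_fun f \<Longrightarrow> poly_fun g \<Longrightarrow> poly_fun (\<lambda>x. f x - g x)"
  unfolding poly_fun_def by (metis poly_diff)

lemma poly_fun_mult [intro]: "poly_fun f \<Longrightarrow> poly_fun g \<Longrightarrow> poly_fun (\<lambda>x. f x * g x)"
  unfolding poly_fun_def by (metis poly_mult)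

lemma poly_fun_power [intro]: "poly_fun f \<Longrightarrow> poly_fun (\<lambda>x. f x ^ n)"
  by (induction n) auto

lemma poly_fun_sum:
  "finite A \<Longrightarrow> (\<And>a. a \<in> A \<Longrightarrow> poly_fun (f a)) \<Longrightarrow> poly_fun (\<lambda>x. \<Sum>a\<in>A. f a x)"
  by (induction A rule: finite_induct) auto

lemma poly_fun_prod:
  "finite A \<Longrightarrow> (\<And>a. a \<in> A \<Longrightarrow> poly_fun (f a)) \<Longrightarrow> poly_fun (\<lambda>x. \<Prod>a\<in>A. f a x)"
  by (induction A rule: finite_induct) auto

lemma poly_fun_compose: "poly_fun f \<Longrightarrow> poly_fun g \<Longrightarrow> poly_fun (\<lambda>x. f (g x))"
  unfolding poly_fun_def by (metis poly_pcompose)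

lemma poly_fun_cnj_conjugate: "poly_fun f \<Longrightarrow> poly_fun (\<lambda>x. cnj (f (cnj x)))"
  unfolding poly_fun_def by (metis poly_map_poly_cnj)

lemma poly_fun_continuous:
  assumes "poly_fun f"
  shows "continuous_on UNIV f"
proof -
  obtain p where "f = (\<lambda>x. poly p x)"
    using assms unfolding poly_fun_def by blast
  then show ?thesis by (simp add: continuous_on_poly continuous_on_id)
qed

lemma poly_fun_eq_0_if_zero_on_nats:
  assumes "poly_fun f" and "\<And>k::nat. f (of_nat k) = 0"
  shows "f x = 0"
proof -
  obtain p where p: "\<And>x. f x = poly p x"
    using assms(1) unfolding poly_fun_def by blast
  show ?thesis
  proof (cases "p = 0")
    case True
    then show ?thesis using p by simp
  next
    case False
    have "range (of_nat :: nat \<Rightarrow> complex) \<subseteq> {x. poly p x = 0}"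
      using assms(2) p by auto
    moreover have "infinite (range (of_nat :: nat \<Rightarrow> complex))"
      by (rule range_inj_infinite) (simp add: inj_on_def)
    ultimately show ?thesis
      using poly_roots_finite[OF False] finite_subset by blast
  qed
qed

text \<open>
  \<open>H (x + \<i> y) (x - \<i> y)\<close> is polynomial in each of \<open>x\<close>, \<open>y\<close> and vanishes for real \<open>x\<close>, \<open>y\<close>:
  first for \<open>x \<in> \<nat>\<close> and all \<open>y\<close>, then for all \<open>x\<close>, \<open>y\<close>.
\<close>
lemma polarization_eq_0:
  assumes poly: "\<And>f g. poly_fun f \<Longrightarrow> poly_fun g \<Longrightarrow> poly_fun (\<lambda>x. H (f x) (g x))"
    and diag: "\<And>s. H s (cnj s) = 0"
  shows "H s u = 0"
proof -
  have nat_re: "H (of_nat n + \<i> * y) (of_nat n - \<i> * y) = 0" for n :: nat and y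
  proof (rule poly_fun_eq_0_if_zero_on_nats[where f = "\<lambda>y. H (of_nat n + \<i> * y) (of_nat n - \<i> * y)"])
    show "poly_fun (\<lambda>y. H (of_nat n + \<i> * y) (of_nat n - \<i> * y))"
      by (intro poly poly_fun_add poly_fun_diff poly_fun_mult poly_fun_const poly_fun_id)
    fix k :: nat
    have "cnj (of_nat n + \<i> * of_nat k) = of_nat n - \<i> * of_nat k" by simp
    then show "H (of_nat n + \<i> * of_nat k) (of_nat n - \<i> * of_nat k) = 0"
      by (metis diag)
  qed
  have all: "H (x + \<i> * y) (x - \<i> * y) = 0" for x y
    by (rule poly_fun_eq_0_if_zero_on_nats[where f = "\<lambda>x. H (x + \<i> * y) (x - \<i> * y)"])
      (auto intro!: poly nat_re)
  have "s = (s + u) / 2 + \<i> * ((s - u) / (2 * \<i>))" and "u = (s + u) / 2 - \<i> * ((s - u) / (2 * \<i>))"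
    by (simp_all add: field_simps)
  then show "H s u = 0" by (metis all)
qed

section \<open>Restriction to complex lines\<close>

definition line_point :: "complex^'n \<Rightarrow> complex^'n \<Rightarrow> complex \<Rightarrow> complex^'n" where
  "line_point y x s = (\<chi> i. y$i + s * (x$i - y$i))"

lemma line_point_0 [simp]: "line_point y x 0 = y"
  and line_point_1 [simp]: "line_point y x 1 = x"
  by (simp_all add: line_point_def vec_eq_iff)

definition poly_on_lines :: "(complex^'n \<Rightarrow> complex) \<Rightarrow> bool" where
  "poly_on_lines f \<longleftrightarrow> (\<forall>y x. poly_fun (\<lambda>s. f (line_point y x s)))"

lemma hol_poly_imp_poly_on_lines:
  fixes f :: "complex^'n \<Rightarrow> complex"
  assumes "hol_poly f"
  shows "poly_on_lines f"
proof -
  obtain A c where A: "finite A" and f: "\<And>z. f z = (\<Sum>\<alpha>\<in>A. c \<alpha> * monom z \<alpha>)"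
    using assms unfolding hol_poly_def by blast
  have "poly_fun (\<lambda>s. \<Sum>\<alpha>\<in>A. c \<alpha> * monom (line_point y x s) \<alpha>)" for y x :: "complex^'n"
    unfolding monom_def line_point_def vec_lambda_beta
    by (intro poly_fun_sum poly_fun_mult poly_fun_prod poly_fun_power poly_fun_add
        poly_fun_const poly_fun_id A) simp_all
  then show ?thesis unfolding poly_on_lines_def f by blast
qed

lemma sqnorm_continuous_on_line:
  assumes "\<And>i. i < k \<Longrightarrow> poly_on_lines (F i)"
  shows "continuous_on UNIV (\<lambda>s. sqnorm k F (line_point y x s))"
  unfolding sqnorm_def using assms unfolding poly_on_lines_def
  by (intro continuous_on_sum continuous_on_power continuous_on_norm poly_fun_continuous) auto

text \<open>On the line through \<open>z\<close> and \<open>w\<close> the function \<open>g\<close> is a nonzero polynomial, so \<open>z\<close> is a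
  limit of points where \<open>g \<noteq> 0\<close>.\<close>
lemma eq_0_if_eq_0_off_zeros:
  fixes g :: "complex^'n \<Rightarrow> complex" and \<phi> :: "complex^'n \<Rightarrow> real"
  assumes g: "poly_on_lines g" "g w \<noteq> 0"
    and cont: "\<And>y x. continuous_on UNIV (\<lambda>s. \<phi> (line_point y x s))"
    and off_zeros: "\<And>z. g z \<noteq> 0 \<Longrightarrow> \<phi> z = 0"
  shows "\<phi> z = 0"
proof -
  obtain p where p: "\<And>s. g (line_point z w s) = poly p s"
    using g(1) unfolding poly_on_lines_def poly_fun_def by blast
  have "p \<noteq> 0" using p[of 1] g(2) by auto
  then have fin: "finite {s. poly p s = 0}" by (rule poly_roots_finite)
  define u where "u n = inverse (of_nat (Suc n) :: complex)" for n
  have "inj u" unfolding u_def inj_def by simp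
  then have "finite (u -` {s. poly p s = 0})" by (rule finite_vimageI[OF fin])
  then have "eventually (\<lambda>n. poly p (u n) \<noteq> 0) sequentially"
    unfolding cofinite_eq_sequentially[symmetric] eventually_cofinite by (simp add: vimage_def)
  then have "eventually (\<lambda>n. \<phi> (line_point z w (u n)) = 0) sequentially"
    by (rule eventually_mono) (use off_zeros p in auto)
  then have "(\<lambda>n. \<phi> (line_point z w (u n))) \<longlonglongrightarrow> 0"
    by (rule tendsto_eventually)
  moreover have "u \<longlonglongrightarrow> 0"
    unfolding u_def using lim_inverse_n LIMSEQ_Suc by blast
  then have "(\<lambda>n. \<phi> (line_point z w (u n))) \<longlonglongrightarrow> \<phi> (line_point z w 0)"
    by (intro continuous_on_tendsto_compose[OF cont]) auto
  ultimately show ?thesis using LIMSEQ_unique by fastforce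
qed

section \<open>The Hermitian inner product on \<open>\<complex>\<^sup>d\<close>\<close>

definition cinner :: "nat \<Rightarrow> (nat \<Rightarrow> complex) \<Rightarrow> (nat \<Rightarrow> complex) \<Rightarrow> complex" where
  "cinner d x y = (\<Sum>t<d. x t * cnj (y t))"

definition sqnorm_vec :: "nat \<Rightarrow> (nat \<Rightarrow> complex) \<Rightarrow> real" where
  "sqnorm_vec d x = (\<Sum>t<d. (cmod (x t))\<^sup>2)"

lemma sqnorm_eq_sqnorm_vec: "sqnorm k F z = sqnorm_vec k (\<lambda>i. F i z)"
  by (simp add: sqnorm_def sqnorm_vec_def)

lemma cinner_self: "cinner d x x = of_real (sqnorm_vec d x)"
  unfolding cinner_def sqnorm_vec_def of_real_sum
  by (simp add: complex_mult_cnj cmod_power2 del: of_real_power)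

lemma sqnorm_vec_eq_Re_cinner: "sqnorm_vec d x = Re (cinner d x x)"
  by (simp add: cinner_self)

lemma sqnorm_vec_nonneg: "0 \<le> sqnorm_vec d x"
  unfolding sqnorm_vec_def by (simp add: sum_nonneg)

lemma sqnorm_vec_eq_0_iff: "sqnorm_vec d x = 0 \<longleftrightarrow> (\<forall>t<d. x t = 0)"
  unfolding sqnorm_vec_def by (subst sum_nonneg_eq_0_iff) auto

lemma sqnorm_vec_cong: "(\<And>t. t < d \<Longrightarrow> x t = y t) \<Longrightarrow> sqnorm_vec d x = sqnorm_vec d y"
  unfolding sqnorm_vec_def by simp

lemma cinner_commute: "cinner d y x = cnj (cinner d x y)"
  unfolding cinner_def by (simp add: mult.commute)

lemma cinner_sum_left: "cinner d (\<lambda>t. \<Sum>r\<in>R. f r t) y = (\<Sum>r\<in>R. cinner d (f r) y)"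
  unfolding cinner_def sum_distrib_right by (rule sum.swap)

lemma cinner_sum_right: "cinner d x (\<lambda>t. \<Sum>r\<in>R. f r t) = (\<Sum>r\<in>R. cinner d x (f r))"
  unfolding cinner_def cnj_sum sum_distrib_left by (rule sum.swap)

lemma cinner_scale_left: "cinner d (\<lambda>t. c * x t) y = c * cinner d x y"
  unfolding cinner_def sum_distrib_left by (simp add: mult.assoc)

lemma cinner_scale_right: "cinner d x (\<lambda>t. c * y t) = cnj c * cinner d x y"
  unfolding cinner_def sum_distrib_left by (rule sum.cong) (simp_all add: algebra_simps)

lemma cinner_diff_left: "cinner d (\<lambda>t. x t - y t) z = cinner d x z - cinner d y z"
  unfolding cinner_def by (simp add: algebra_simps sum_subtractf)

lemma cinner_diff_right: "cinner d z (\<lambda>t. x t - y t) = cinner d z x - cinner d z y"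
  unfolding cinner_def by (simp add: algebra_simps sum_subtractf)

definition orthonormal :: "nat \<Rightarrow> nat \<Rightarrow> (nat \<Rightarrow> nat \<Rightarrow> complex) \<Rightarrow> bool" where
  "orthonormal d k E \<longleftrightarrow> (\<forall>i<k. \<forall>j<k. cinner d (E i) (E j) = (if i = j then 1 else 0))"

lemma orthonormal_extend:
  assumes E: "orthonormal d k E" and orth: "\<And>j. j < k \<Longrightarrow> cinner d e (E j) = 0"
    and unit: "cinner d e e = 1"
  shows "orthonormal d (Suc k) (E(k := e))"
  unfolding orthonormal_def
proof (intro allI impI)
  fix i j assume "i < Suc k" "j < Suc k"
  then consider "i < k" "j < k" | "i < k" "j = k" | "i = k" "j < k" | "i = k" "j = k"
    by linarith
  then show "cinner d ((E(k := e)) i) ((E(k := e)) j) = (if i = j then 1 else 0)"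
  proof cases
    case 1
    then show ?thesis using E unfolding orthonormal_def by auto
  next
    case 2
    then show ?thesis using orth[of i] cinner_commute[of d e "E i"] by auto
  next
    case 3
    then show ?thesis using orth[of j] by auto
  qed (simp add: unit)
qed

lemma cinner_orthonormal_combs:
  assumes "orthonormal d k E"
  shows "cinner d (\<lambda>t. \<Sum>r<k. c r * E r t) (\<lambda>t. \<Sum>r<k. b r * E r t) = (\<Sum>r<k. c r * cnj (b r))"
proof -
  have "cinner d (\<lambda>t. \<Sum>r<k. c r * E r t) (\<lambda>t. \<Sum>r<k. b r * E r t)
      = (\<Sum>r<k. \<Sum>r'<k. c r * cnj (b r') * cinner d (E r) (E r'))"
    unfolding cinner_sum_left cinner_scale_left cinner_sum_right cinner_scale_right
    by (simp add: sum_distrib_left algebra_simps)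
  also have "\<dots> = (\<Sum>r<k. \<Sum>r'<k. if r' = r then c r * cnj (b r) else 0)"
    using assms unfolding orthonormal_def by (intro sum.cong refl) auto
  finally show ?thesis by simp
qed

lemma cinner_orthonormal_comb_left:
  assumes "orthonormal d k E" and "j < k"
  shows "cinner d (\<lambda>t. \<Sum>r<k. c r * E r t) (E j) = c j"
proof -
  have "cinner d (\<lambda>t. \<Sum>r<k. c r * E r t) (E j) = (\<Sum>r<k. c r * cinner d (E r) (E j))"
    unfolding cinner_sum_left cinner_scale_left ..
  also have "\<dots> = (\<Sum>r<k. if r = j then c j else 0)"
    using assms unfolding orthonormal_def by (intro sum.cong refl) auto
  finally show ?thesis using assms(2) by simp
qed

lemma bessel_inequality:
  assumes "orthonormal d k E"
  shows "(\<Sum>r<k. (cmod (cinner d v (E r)))\<^sup>2) \<le> sqnorm_vec d v"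
proof -
  define c where "c r = cinner d v (E r)" for r
  define P where "P t = (\<Sum>r<k. c r * E r t)" for t
  define S where "S = (\<Sum>r<k. c r * cnj (c r))"
  have PP: "cinner d P P = S"
    unfolding P_def S_def by (rule cinner_orthonormal_combs[OF assms])
  have Pv: "cinner d P v = S"
    unfolding P_def S_def cinner_sum_left cinner_scale_left
    by (intro sum.cong refl) (simp add: c_def cinner_commute[of d v])
  have vP: "cinner d v P = S"
    using Pv cinner_commute[of d v P] unfolding S_def by (simp add: mult.commute)
  have "cinner d (\<lambda>t. v t - P t) (\<lambda>t. v t - P t) = cinner d v v - S"
    unfolding cinner_diff_left cinner_diff_right PP Pv vP by simp
  then have "sqnorm_vec d (\<lambda>t. v t - P t) = sqnorm_vec d v - Re S"
    by (simp add: sqnorm_vec_eq_Re_cinner)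
  moreover have "Re S = (\<Sum>r<k. (cmod (c r))\<^sup>2)"
    unfolding S_def by (simp add: complex_mult_cnj cmod_power2)
  ultimately show ?thesis
    using sqnorm_vec_nonneg[of d "\<lambda>t. v t - P t"] unfolding c_def by simp
qed

lemma orthonormal_card_le:
  assumes "orthonormal d k E"
  shows "k \<le> d"
proof -
  have unit_bound: "(\<Sum>r<k. (cmod (E r t))\<^sup>2) \<le> 1" if t: "t < d" for t
  proof -
    define \<epsilon> where "\<epsilon> s = (if s = t then 1 else 0 :: complex)" for s
    have "cinner d \<epsilon> (E r) = cnj (E r t)" for r
      unfolding cinner_def \<epsilon>_def using t by (simp add: if_distrib[of "\<lambda>x. x * _"] cong: if_cong)
    then have "(\<Sum>r<k. (cmod (E r t))\<^sup>2) = (\<Sum>r<k. (cmod (cinner d \<epsilon> (E r)))\<^sup>2)" by simp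
    also have "\<dots> \<le> sqnorm_vec d \<epsilon>" by (rule bessel_inequality[OF assms])
    also have "sqnorm_vec d \<epsilon> = 1"
      unfolding sqnorm_vec_def \<epsilon>_def using t by (simp add: if_distrib[of "\<lambda>x. (cmod x)\<^sup>2"] cong: if_cong)
    finally show ?thesis .
  qed
  have "real k = (\<Sum>r<k. sqnorm_vec d (E r))"
    using assms unfolding orthonormal_def sqnorm_vec_eq_Re_cinner by simp
  also have "\<dots> = (\<Sum>t<d. \<Sum>r<k. (cmod (E r t))\<^sup>2)"
    unfolding sqnorm_vec_def by (rule sum.swap)
  also have "\<dots> \<le> (\<Sum>t<d. 1)"
    by (rule sum_mono) (simp add: unit_bound)
  finally show ?thesis by simp
qed

section \<open>Contractions from dominated Gram kernels\<close>

definition lin_comb :: "nat \<Rightarrow> (nat \<Rightarrow> complex) \<Rightarrow> (nat \<Rightarrow> nat \<Rightarrow> complex) \<Rightarrow> nat \<Rightarrow> complex" where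
  "lin_comb m \<delta> V = (\<lambda>t. \<Sum>j<m. \<delta> j * V j t)"

lemma sum_scale_lin_comb:
  "(\<Sum>r\<in>R. c r * lin_comb m (\<gamma> r) V t) = lin_comb m (\<lambda>j. \<Sum>r\<in>R. c r * \<gamma> r j) V t"
  unfolding lin_comb_def sum_distrib_left sum_distrib_right
  by (subst sum.swap) (simp add: mult.assoc)

lemma lin_comb_Suc_upd:
  "lin_comb (Suc m) (\<delta>(m := a)) (\<lambda>j. V ((w(m := x)) j)) t = lin_comb m \<delta> (\<lambda>j. V (w j)) t + a * V x t"
  unfolding lin_comb_def by simp

lemma cinner_lin_comb_self:
  "cinner d (lin_comb m \<delta> V) (lin_comb m \<delta> V) = (\<Sum>j<m. \<Sum>j'<m. \<delta> j * cnj (\<delta> j') * cinner d (V j) (V j'))"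
  unfolding lin_comb_def cinner_sum_left cinner_scale_left cinner_sum_right cinner_scale_right
  by (simp add: sum_distrib_left algebra_simps)

lemma gram_schmidt_step:
  assumes E: "orthonormal d k E"
    and E_span: "\<And>r. r < k \<Longrightarrow> E r = lin_comb m (\<gamma> r) (\<lambda>j. X (w j))"
    and not_in_span: "\<not> (\<forall>t<d. X x t = (\<Sum>r<k. cinner d (X x) (E r) * E r t))"
  shows "\<exists>E' \<gamma>'. orthonormal d (Suc k) E' \<and>
           (\<forall>r<Suc k. E' r = lin_comb (Suc m) (\<gamma>' r) (\<lambda>j. X ((w(m := x)) j)))"
proof -
  define c where "c r = cinner d (X x) (E r)" for r
  define \<rho> where "\<rho> t = X x t - (\<Sum>r<k. c r * E r t)" for t
  have "sqnorm_vec d \<rho> \<noteq> 0"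
    using not_in_span unfolding sqnorm_vec_eq_0_iff \<rho>_def c_def by simp
  then have \<rho>_pos: "sqnorm_vec d \<rho> > 0"
    using sqnorm_vec_nonneg[of d \<rho>] by linarith
  define a where "a = complex_of_real (1 / sqrt (sqnorm_vec d \<rho>))"
  define E' where "E' = E(k := (\<lambda>t. a * \<rho> t))"
  define \<gamma>' where "\<gamma>' r = (if r < k then (\<gamma> r)(m := 0)
      else (\<lambda>j. \<Sum>r'<k. - (a * c r') * \<gamma> r' j)(m := a))" for r
  have E'_span: "E' r = lin_comb (Suc m) (\<gamma>' r) (\<lambda>j. X ((w(m := x)) j))" if r: "r < Suc k" for r
  proof (cases "r < k")
    case True
    have "lin_comb (Suc m) ((\<gamma> r)(m := 0)) (\<lambda>j. X ((w(m := x)) j)) t = lin_comb m (\<gamma> r) (\<lambda>j. X (w j)) t" for t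
      by (simp only: lin_comb_Suc_upd) simp
    then show ?thesis
      unfolding E'_def \<gamma>'_def using E_span[OF True] True by (auto intro!: ext)
  next
    case False
    then have rk: "r = k" using r by simp
    have "lin_comb (Suc m) (\<gamma>' r) (\<lambda>j. X ((w(m := x)) j)) t = a * \<rho> t" for t
    proof -
      have "\<gamma>' r = (\<lambda>j. \<Sum>r'<k. - (a * c r') * \<gamma> r' j)(m := a)"
        using rk by (simp add: \<gamma>'_def)
      then have "lin_comb (Suc m) (\<gamma>' r) (\<lambda>j. X ((w(m := x)) j)) t
          = lin_comb m (\<lambda>j. \<Sum>r'<k. - (a * c r') * \<gamma> r' j) (\<lambda>j. X (w j)) t + a * X x t"
        by (simp only: lin_comb_Suc_upd)
      also have "lin_comb m (\<lambda>j. \<Sum>r'<k. - (a * c r') * \<gamma> r' j) (\<lambda>j. X (w j)) t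
          = (\<Sum>r'<k. - (a * c r') * E r' t)"
        unfolding sum_scale_lin_comb[symmetric] using E_span by (intro sum.cong) auto
      finally show ?thesis
        unfolding \<rho>_def by (simp add: algebra_simps sum_distrib_left sum_negf)
    qed
    then show ?thesis unfolding E'_def rk by auto
  qed
  have "cinner d (\<lambda>t. a * \<rho> t) (E j) = 0" if j: "j < k" for j
  proof -
    have "cinner d (\<lambda>t. a * \<rho> t) (E j) = a * (cinner d (X x) (E j) - cinner d (\<lambda>t. \<Sum>r<k. c r * E r t) (E j))"
      unfolding \<rho>_def by (simp add: cinner_scale_left cinner_diff_left)
    then show ?thesis unfolding cinner_orthonormal_comb_left[OF E j] c_def by simp
  qed
  moreover have "cinner d (\<lambda>t. a * \<rho> t) (\<lambda>t. a * \<rho> t) = 1"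
    unfolding cinner_scale_left cinner_scale_right a_def cinner_self
    using \<rho>_pos by (simp flip: of_real_mult)
  ultimately have "orthonormal d (Suc k) E'"
    unfolding E'_def by (rule orthonormal_extend[OF E])
  then show ?thesis using E'_span by blast
qed

text \<open>Gram--Schmidt on values of \<open>X\<close> must stop, since orthonormal families in \<open>\<complex>\<^sup>d\<close> have at
  most \<open>d\<close> members.\<close>
lemma orthonormal_basis_of_span:
  fixes X :: "'p \<Rightarrow> nat \<Rightarrow> complex"
  obtains K E m \<gamma> w where "orthonormal d K E"
    and "\<And>r. r < K \<Longrightarrow> E r = lin_comb m (\<gamma> r) (\<lambda>j. X (w j))"
    and "\<And>x t. t < d \<Longrightarrow> X x t = (\<Sum>r<K. cinner d (X x) (E r) * E r t)"
proof -
  define good where "good k \<longleftrightarrow>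
    (\<exists>E m w \<gamma>. orthonormal d k E \<and> (\<forall>r<k. E r = lin_comb m (\<gamma> r) (\<lambda>j. X (w j))))" for k
  have good_0: "good 0" unfolding good_def orthonormal_def by auto
  have good_bound: "k \<le> d" if "good k" for k
    using that orthonormal_card_le unfolding good_def by blast
  define K where "K = (GREATEST k. good k)"
  have "good K" unfolding K_def by (rule GreatestI_nat[where P = good, OF good_0 good_bound])
  then obtain E m w \<gamma> where E: "orthonormal d K E"
    and E_span: "\<And>r. r < K \<Longrightarrow> E r = lin_comb m (\<gamma> r) (\<lambda>j. X (w j))"
    unfolding good_def by blast
  have "\<forall>t<d. X x t = (\<Sum>r<K. cinner d (X x) (E r) * E r t)" for x
  proof (rule ccontr)
    assume "\<not> ?thesis"
    from gram_schmidt_step[OF E E_span this] have "good (Suc K)"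
      unfolding good_def by blast
    then have "Suc K \<le> K" unfolding K_def by (rule Greatest_le_nat[where P = good, OF _ good_bound])
    then show False by simp
  qed
  then show ?thesis using that E E_span by blast
qed

lemma dominated_lin_comb_eq_0:
  assumes dom: "\<And>m w \<delta>. sqnorm_vec e (lin_comb m \<delta> (\<lambda>j. Y (w j))) \<le> sqnorm_vec d (lin_comb m \<delta> (\<lambda>j. X (w j)))"
    and "sqnorm_vec d (lin_comb m \<delta> (\<lambda>j. X (w j))) = 0" and "i < e"
  shows "lin_comb m \<delta> (\<lambda>j. Y (w j)) i = 0"
proof -
  have "sqnorm_vec e (lin_comb m \<delta> (\<lambda>j. Y (w j))) = 0"
    using dom[of m \<delta> w] assms(2) sqnorm_vec_nonneg[of e] by (simp add: order_antisym)
  then show ?thesis using assms(3) unfolding sqnorm_vec_eq_0_iff by simp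
qed

text \<open>\<open>L = \<Sum>\<^sub>r F\<^sub>r E\<^sub>r\<^sup>*\<close>, where \<open>F\<^sub>r\<close> is the combination of values of \<open>Y\<close> with the same coefficients
  as \<open>E\<^sub>r\<close>; domination makes this independent of the representation and contractive.\<close>
lemma contraction_of_dominated:
  fixes X Y :: "'p \<Rightarrow> nat \<Rightarrow> complex"
  assumes dom: "\<And>m w \<delta>. sqnorm_vec e (lin_comb m \<delta> (\<lambda>j. Y (w j))) \<le> sqnorm_vec d (lin_comb m \<delta> (\<lambda>j. X (w j)))"
  shows "\<exists>L. (\<forall>x. \<forall>i<e. Y x i = mat_apply d L (X x) i) \<and>
             (\<forall>v. sqnorm_vec e (mat_apply d L v) \<le> sqnorm_vec d v)"
proof -
  obtain K E m \<gamma> w where E: "orthonormal d K E"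
    and E_span: "\<And>r. r < K \<Longrightarrow> E r = lin_comb m (\<gamma> r) (\<lambda>j. X (w j))"
    and expand: "\<And>x t. t < d \<Longrightarrow> X x t = (\<Sum>r<K. cinner d (X x) (E r) * E r t)"
    by (rule orthonormal_basis_of_span[where d = d and X = X]) blast
  define F where "F r = lin_comb m (\<gamma> r) (\<lambda>j. Y (w j))" for r
  define L where "L i j = (\<Sum>r<K. F r i * cnj (E r j))" for i j
  define \<delta> where "\<delta> v j = (\<Sum>r<K. cinner d v (E r) * \<gamma> r j)" for v j
  have L_apply: "mat_apply d L v = lin_comb m (\<delta> v) (\<lambda>j. Y (w j))" for v
  proof
    fix i
    have "mat_apply d L v i = (\<Sum>r<K. cinner d v (E r) * F r i)"
      unfolding mat_apply_def L_def cinner_def sum_distrib_right sum_distrib_left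
      by (subst sum.swap) (simp add: algebra_simps)
    then show "mat_apply d L v i = lin_comb m (\<delta> v) (\<lambda>j. Y (w j)) i"
      unfolding F_def sum_scale_lin_comb \<delta>_def .
  qed
  have proj: "lin_comb m (\<delta> v) (\<lambda>j. X (w j)) = (\<lambda>t. \<Sum>r<K. cinner d v (E r) * E r t)" for v
    unfolding \<delta>_def sum_scale_lin_comb[symmetric] using E_span by simp
  have contractive: "sqnorm_vec e (mat_apply d L v) \<le> sqnorm_vec d v" for v
  proof -
    have "sqnorm_vec e (mat_apply d L v) \<le> sqnorm_vec d (lin_comb m (\<delta> v) (\<lambda>j. X (w j)))"
      unfolding L_apply by (rule dom)
    also have "\<dots> = (\<Sum>r<K. (cmod (cinner d v (E r)))\<^sup>2)"
      unfolding proj sqnorm_vec_eq_Re_cinner cinner_orthonormal_combs[OF E]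
      by (simp add: complex_mult_cnj cmod_power2)
    also have "\<dots> \<le> sqnorm_vec d v" by (rule bessel_inequality[OF E])
    finally show ?thesis .
  qed
  have represents: "Y x i = mat_apply d L (X x) i" if i: "i < e" for x i
  proof -
    have "sqnorm_vec d (lin_comb (Suc m) ((\<delta> (X x))(m := -1)) (\<lambda>j. X ((w(m := x)) j))) = 0"
      unfolding sqnorm_vec_eq_0_iff lin_comb_Suc_upd proj using expand by simp
    then have "lin_comb (Suc m) ((\<delta> (X x))(m := -1)) (\<lambda>j. Y ((w(m := x)) j)) i = 0"
      by (rule dominated_lin_comb_eq_0[OF dom _ i])
    then show ?thesis unfolding lin_comb_Suc_upd L_apply by simp
  qed
  show ?thesis using contractive represents by blast
qed

lemma gram_identity_dominates:
  assumes "\<And>x y. cinner d (X x) (X y) = cinner e (Y x) (Y y) + cinner k (Z x) (Z y)"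
  shows "sqnorm_vec e (lin_comb m \<delta> (\<lambda>j. Y (w j))) \<le> sqnorm_vec d (lin_comb m \<delta> (\<lambda>j. X (w j)))"
proof -
  have "cinner d (lin_comb m \<delta> (\<lambda>j. X (w j))) (lin_comb m \<delta> (\<lambda>j. X (w j)))
      = cinner e (lin_comb m \<delta> (\<lambda>j. Y (w j))) (lin_comb m \<delta> (\<lambda>j. Y (w j)))
        + cinner k (lin_comb m \<delta> (\<lambda>j. Z (w j))) (lin_comb m \<delta> (\<lambda>j. Z (w j)))"
    unfolding cinner_lin_comb_self assms by (simp add: algebra_simps sum.distrib)
  then have "sqnorm_vec d (lin_comb m \<delta> (\<lambda>j. X (w j)))
      = sqnorm_vec e (lin_comb m \<delta> (\<lambda>j. Y (w j))) + sqnorm_vec k (lin_comb m \<delta> (\<lambda>j. Z (w j)))"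
    unfolding sqnorm_vec_eq_Re_cinner by simp
  then show ?thesis using sqnorm_vec_nonneg[of k] by simp
qed

text \<open>Polarization: \<open>(s, u) \<mapsto> \<langle>A(l s), A(l (cnj u))\<rangle> - \<dots>\<close> along a line \<open>l\<close> through \<open>y\<close> and
  \<open>x\<close> is polynomial in \<open>s\<close> and \<open>u\<close> and vanishes for \<open>u = cnj s\<close>.\<close>
lemma cinner_identity_of_sqnorm_identity:
  fixes A C F :: "nat \<Rightarrow> complex^'n \<Rightarrow> complex"
  assumes A: "\<And>i. i < d1 \<Longrightarrow> poly_on_lines (A i)"
    and C: "\<And>i. i < d2 \<Longrightarrow> poly_on_lines (C i)"
    and F: "\<And>i. i < d3 \<Longrightarrow> poly_on_lines (F i)"
    and sqnorm_eq: "\<And>z. sqnorm d1 A z = sqnorm d2 C z + sqnorm d3 F z"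
  shows "cinner d1 (\<lambda>i. A i x) (\<lambda>i. A i y) = cinner d2 (\<lambda>i. C i x) (\<lambda>i. C i y) + cinner d3 (\<lambda>i. F i x) (\<lambda>i. F i y)"
proof -
  define l where "l = line_point y x"
  define kernel where "kernel d B s u = (\<Sum>i<d. B i (l s) * cnj (B i (l (cnj u))))"
    for d and B :: "nat \<Rightarrow> complex^'n \<Rightarrow> complex" and s u
  have kernel_poly: "poly_fun (\<lambda>x. kernel d B (f x) (g x))"
    if B: "\<And>i. i < d \<Longrightarrow> poly_on_lines (B i)" and "poly_fun f" "poly_fun g" for d B f g
  proof -
    have "poly_fun (\<lambda>s. B i (l s))" if "i < d" for i
      using B[OF that] unfolding poly_on_lines_def l_def by blast
    then show ?thesis
      unfolding kernel_def
      by (intro poly_fun_sum poly_fun_mult poly_fun_compose[OF _ \<open>poly_fun f\<close>]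
          poly_fun_compose[OF poly_fun_cnj_conjugate \<open>poly_fun g\<close>]) auto
  qed
  have kernel_diag: "kernel d B s (cnj s) = of_real (sqnorm d B (l s))" for d B s
    unfolding kernel_def sqnorm_def of_real_sum
    by (simp add: complex_mult_cnj cmod_power2 del: of_real_power)
  have "kernel d1 A s u - kernel d2 C s u - kernel d3 F s u = 0" for s u
    by (rule polarization_eq_0) (auto intro!: poly_fun_diff kernel_poly A C F simp: kernel_diag sqnorm_eq)
  from this[of 1 0] show ?thesis
    unfolding kernel_def l_def cinner_def by (simp add: algebra_simps)
qed

lemma contraction_of_sqnorm_identity:
  fixes A C F :: "nat \<Rightarrow> complex^'n \<Rightarrow> complex"
  assumes "\<And>i. i < d1 \<Longrightarrow> poly_on_lines (A i)"
    and "\<And>i. i < d2 \<Longrightarrow> poly_on_lines (C i)"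
    and "\<And>i. i < d3 \<Longrightarrow> poly_on_lines (F i)"
    and "\<And>z. sqnorm d1 A z = sqnorm d2 C z + sqnorm d3 F z"
  shows "\<exists>L. (\<forall>z. \<forall>i<d2. C i z = mat_apply d1 L (\<lambda>j. A j z) i) \<and>
             (\<forall>v. sqnorm_vec d2 (mat_apply d1 L v) \<le> sqnorm_vec d1 v)"
  by (rule contraction_of_dominated[where X = "\<lambda>z i. A i z" and Y = "\<lambda>z i. C i z"],
      rule gram_identity_dominates[where Z = "\<lambda>z i. F i z"],
      rule cinner_identity_of_sqnorm_identity[OF assms])

section \<open>Non-negative Hermitian forms are sums of squares\<close>

definition herm_form :: "nat set \<Rightarrow> (nat \<Rightarrow> nat \<Rightarrow> complex) \<Rightarrow> (nat \<Rightarrow> complex) \<Rightarrow> complex" where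
  "herm_form S M v = (\<Sum>i\<in>S. \<Sum>j\<in>S. cnj (v i) * M i j * v j)"

definition hermitian_on :: "nat set \<Rightarrow> (nat \<Rightarrow> nat \<Rightarrow> complex) \<Rightarrow> bool" where
  "hermitian_on S M \<longleftrightarrow> (\<forall>i\<in>S. \<forall>j\<in>S. M j i = cnj (M i j))"

lemma hermitian_onD: "hermitian_on S M \<Longrightarrow> i \<in> S \<Longrightarrow> j \<in> S \<Longrightarrow> M j i = cnj (M i j)"
  unfolding hermitian_on_def by blast

lemma herm_form_insert:
  assumes "finite S" "x \<notin> S"
  shows "herm_form (insert x S) M v = cnj (v x) * M x x * v x + cnj (v x) * (\<Sum>j\<in>S. M x j * v j)
     + (\<Sum>i\<in>S. cnj (v i) * M i x) * v x + herm_form S M v"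
  unfolding herm_form_def using assms
  by (simp add: sum.distrib sum_distrib_left sum_distrib_right algebra_simps)

lemma herm_form_cong: "(\<And>i. i \<in> S \<Longrightarrow> v i = v' i) \<Longrightarrow> herm_form S M v = herm_form S M v'"
  unfolding herm_form_def by simp

lemma herm_form_unit_vector:
  "finite S \<Longrightarrow> j \<in> S \<Longrightarrow> herm_form S M (\<lambda>i. if i = j then 1 else 0) = M j j"
  unfolding herm_form_def
  by (simp add: if_distrib[of cnj] if_distrib[of "\<lambda>x. x * _"] if_distrib[of "\<lambda>x. _ * x"] cong: if_cong)

text \<open>Test vector \<open>v = s e\<^sub>x + e\<^sub>j\<close> with \<open>s = -t M\<^sub>x\<^sub>j\<close>: the form is \<open>M\<^sub>j\<^sub>j - 2 t |M\<^sub>x\<^sub>j|\<^sup>2\<close>.\<close>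
lemma psd_diag_zero_imp_row_zero:
  assumes S: "finite S" "x \<notin> S" "j \<in> S"
    and herm: "hermitian_on (insert x S) M"
    and psd: "\<forall>v. 0 \<le> Re (herm_form (insert x S) M v)"
    and diag: "M x x = 0"
  shows "M x j = 0"
proof (rule ccontr)
  define b where "b = M x j"
  assume "M x j \<noteq> 0"
  then have b_pos: "(cmod b)\<^sup>2 > 0" unfolding b_def by simp
  define t where "t = (Re (M j j) + 1) / (2 * (cmod b)\<^sup>2)"
  define s where "s = - (complex_of_real t * b)"
  define v where "v i = (if i = x then s else if i = j then 1 else 0)" for i
  have v_S: "v i = (if i = j then 1 else 0)" if "i \<in> S" for i
    using that S unfolding v_def by auto
  have row: "(\<Sum>k\<in>S. M x k * v k) = M x j"
    using S by (simp add: v_S if_distrib[of "\<lambda>x. _ * x"] cong: if_cong)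
  have col: "(\<Sum>i\<in>S. cnj (v i) * M i x) = M j x"
    using S by (simp add: v_S if_distrib[of cnj] if_distrib[of "\<lambda>x. x * _"] cong: if_cong)
  have "herm_form S M v = M j j"
    using herm_form_unit_vector[OF S(1,3), of M] herm_form_cong[of S v _ M] v_S by simp
  moreover have "M j x = cnj b"
    using hermitian_onD[OF herm, of x j] S unfolding b_def by simp
  ultimately have "herm_form (insert x S) M v = cnj s * b + cnj b * s + M j j"
    unfolding herm_form_insert[OF S(1,2)] row col using diag S by (simp add: v_def b_def)
  also have "cnj s * b + cnj b * s = - complex_of_real (2 * t * (cmod b)\<^sup>2)"
    unfolding s_def by (simp add: algebra_simps flip: complex_norm_square)
  finally have "Re (herm_form (insert x S) M v) = Re (M j j) - 2 * t * (cmod b)\<^sup>2" by simp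
  also have "\<dots> = -1" unfolding t_def using b_pos by (simp add: field_simps)
  finally show False using psd by (metis neg_0_le_iff_le not_one_le_zero)
qed

definition schur_complement :: "(nat \<Rightarrow> nat \<Rightarrow> complex) \<Rightarrow> nat \<Rightarrow> nat \<Rightarrow> nat \<Rightarrow> complex" where
  "schur_complement M x i j = M i j - M i x * M x j / M x x"

text \<open>Completing the square at the pivot \<open>x\<close> (Lagrange's reduction).\<close>
lemma herm_form_complete_square:
  assumes S: "finite S" "x \<notin> S" and herm: "hermitian_on (insert x S) M" and pivot: "M x x \<noteq> 0"
  shows "herm_form (insert x S) M v
    = herm_form S (schur_complement M x) v + of_real ((cmod (\<Sum>j\<in>insert x S. M x j * v j))\<^sup>2) / M x x"
proof -
  define u where "u = (\<Sum>j\<in>insert x S. M x j * v j)"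
  have "M i x = cnj (M x i)" if "i \<in> insert x S" for i
    using hermitian_onD[OF herm _ that] by blast
  then have col: "(\<Sum>i\<in>insert x S. cnj (v i) * M i x) = cnj u"
    unfolding u_def cnj_sum by (intro sum.cong refl) (simp add: mult.commute)
  have "herm_form (insert x S) M v = herm_form (insert x S) (schur_complement M x) v
      + (\<Sum>i\<in>insert x S. \<Sum>j\<in>insert x S. cnj (v i) * M i x * (M x j * v j) / M x x)"
    unfolding herm_form_def schur_complement_def
    by (simp add: algebra_simps sum.distrib[symmetric] sum_subtractf)
  also have "(\<Sum>i\<in>insert x S. \<Sum>j\<in>insert x S. cnj (v i) * M i x * (M x j * v j) / M x x)
      = cnj u * u / M x x"
    unfolding u_def sum_product sum_divide_distrib col[unfolded u_def, symmetric] ..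
  also have "herm_form (insert x S) (schur_complement M x) v = herm_form S (schur_complement M x) v"
    unfolding herm_form_insert[OF S] schur_complement_def using pivot by simp
  finally show ?thesis
    unfolding u_def[symmetric] complex_norm_square by (simp add: mult.commute)
qed

lemma hermitian_on_schur_complement:
  assumes "hermitian_on (insert x S) M"
  shows "hermitian_on S (schur_complement M x)"
  unfolding hermitian_on_def
proof (intro ballI)
  fix i j assume "i \<in> S" "j \<in> S"
  then have ji: "M j i = cnj (M i j)" and ix: "M i x = cnj (M x i)" and jx: "M j x = cnj (M x j)"
    using hermitian_onD[OF assms] by blast+
  have "cnj (M x x) = M x x"
    using hermitian_onD[OF assms insertI1 insertI1] by (rule sym)
  then show "schur_complement M x j i = cnj (schur_complement M x i j)"
    unfolding schur_complement_def ji ix jx by simp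
qed

lemma psd_schur_complement:
  assumes S: "finite S" "x \<notin> S" and herm: "hermitian_on (insert x S) M" and pivot: "M x x \<noteq> 0"
    and psd: "\<forall>v. 0 \<le> Re (herm_form (insert x S) M v)"
  shows "0 \<le> Re (herm_form S (schur_complement M x) v)"
proof -
  \<comment> \<open>Choosing \<open>v\<^sub>x\<close> to kill the square leaves the Schur complement.\<close>
  define v' where "v' = v(x := - (\<Sum>j\<in>S. M x j * v j) / M x x)"
  have "(\<Sum>j\<in>insert x S. M x j * v' j) = 0"
    unfolding v'_def using S pivot by (auto intro!: sum.cong)
  then have "herm_form (insert x S) M v' = herm_form S (schur_complement M x) v'"
    by (simp add: herm_form_complete_square[OF S herm pivot])
  moreover have "herm_form S (schur_complement M x) v' = herm_form S (schur_complement M x) v"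
    by (rule herm_form_cong) (use S in \<open>auto simp: v'_def\<close>)
  ultimately show ?thesis using psd by metis
qed

lemma herm_form_zero_pivot:
  assumes S: "finite S" "x \<notin> S" and herm: "hermitian_on (insert x S) M"
    and psd: "\<forall>v. 0 \<le> Re (herm_form (insert x S) M v)" and diag: "M x x = 0"
  shows "herm_form (insert x S) M v = herm_form S M v"
proof -
  have row: "M x j = 0" and col: "M j x = 0" if "j \<in> S" for j
    using psd_diag_zero_imp_row_zero[OF S that herm psd diag] hermitian_onD[OF herm, of x j] that
    by auto
  then show ?thesis unfolding herm_form_insert[OF S] using diag by simp
qed

lemma psd_pivot_pos:
  assumes "finite S" "x \<in> S" and herm: "hermitian_on S M"
    and psd: "\<forall>v. 0 \<le> Re (herm_form S M v)" and pivot: "M x x \<noteq> 0"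
  shows "M x x = of_real (Re (M x x))" and "0 < Re (M x x)"
proof -
  have "M x x = cnj (M x x)" using hermitian_onD[OF herm assms(2) assms(2)] .
  then show real: "M x x = of_real (Re (M x x))"
    by (metis Reals_cnj_iff complex_is_Real_iff of_real_Re)
  have "herm_form S M (\<lambda>i. if i = x then 1 else 0) = M x x"
    by (rule herm_form_unit_vector[OF assms(1,2)])
  then have "0 \<le> Re (M x x)" using psd by metis
  then show "0 < Re (M x x)" using pivot real by (metis less_eq_real_def of_real_0)
qed

lemma psd_herm_form_sum_of_squares:
  assumes "finite S" "hermitian_on S M" "\<forall>v. 0 \<le> Re (herm_form S M v)"
  shows "\<exists>(K::nat) c. \<forall>v. herm_form S M v = of_real (\<Sum>k<K. (cmod (\<Sum>j\<in>S. c k j * v j))\<^sup>2)"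
  using assms
proof (induction S arbitrary: M rule: finite_induct)
  case empty
  show ?case by (intro exI[of _ "0::nat"]) (simp add: herm_form_def)
next
  case (insert x S)
  note S = insert.hyps(1,2) and herm = insert.prems(1) and psd = insert.prems(2)
  show ?case
  proof (cases "M x x = 0")
    case True
    note restrict = herm_form_zero_pivot[OF S herm psd True]
    have "hermitian_on S M" using herm unfolding hermitian_on_def by blast
    moreover have "\<forall>v. 0 \<le> Re (herm_form S M v)" using psd restrict by simp
    ultimately obtain K :: nat and c
      where "\<And>v. herm_form S M v = of_real (\<Sum>k<K. (cmod (\<Sum>j\<in>S. c k j * v j))\<^sup>2)"
      using insert.IH by blast
    moreover have "(\<Sum>j\<in>insert x S. (if j = x then 0 else c k j) * v j) = (\<Sum>j\<in>S. c k j * v j)" for k v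
      using S by (auto intro!: sum.cong)
    ultimately show ?thesis
      by (intro exI[of _ K] exI[of _ "\<lambda>k j. if j = x then 0 else c k j"]) (simp add: restrict)
  next
    case False
    define \<mu> where "\<mu> = Re (M x x)"
    have M_xx: "M x x = of_real \<mu>" and \<mu>_pos: "0 < \<mu>"
      unfolding \<mu>_def using psd_pivot_pos[OF _ insertI1 herm psd False] S by auto
    obtain K :: nat and c where c: "\<And>v. herm_form S (schur_complement M x) v
        = of_real (\<Sum>k<K. (cmod (\<Sum>j\<in>S. c k j * v j))\<^sup>2)"
      using insert.IH[OF hermitian_on_schur_complement[OF herm] allI[OF psd_schur_complement[OF S herm False psd]]]
      by blast
    define c' where "c' k j = (if k < K then (if j = x then 0 else c k j) else M x j / of_real (sqrt \<mu>))" for k j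
    have old_rows: "(\<Sum>j\<in>insert x S. c' k j * v j) = (\<Sum>j\<in>S. c k j * v j)" if "k < K" for k v
      using S that by (auto simp: c'_def intro!: sum.cong)
    have new_row: "(cmod (\<Sum>j\<in>insert x S. c' K j * v j))\<^sup>2 = (cmod (\<Sum>j\<in>insert x S. M x j * v j))\<^sup>2 / \<mu>" for v
    proof -
      have "(\<Sum>j\<in>insert x S. c' K j * v j) = (\<Sum>j\<in>insert x S. M x j * v j) / of_real (sqrt \<mu>)"
        unfolding c'_def sum_divide_distrib by (auto intro!: sum.cong)
      then show ?thesis using \<mu>_pos by (simp add: norm_divide power_divide)
    qed
    have "herm_form (insert x S) M v = of_real (\<Sum>k<Suc K. (cmod (\<Sum>j\<in>insert x S. c' k j * v j))\<^sup>2)" for v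
      unfolding herm_form_complete_square[OF S herm False] c M_xx sum.lessThan_Suc new_row
      using old_rows by simp
    then show ?thesis by blast
  qed
qed

lemma id_minus_adj_mult_form:
  "(\<Sum>i<d. \<Sum>j<d. cnj (v i) * id_minus_adj_mult e L i j * v j)
     = of_real (sqnorm_vec d v - sqnorm_vec e (mat_apply d L v))"
proof -
  have id_part: "(\<Sum>i<d. \<Sum>j<d. cnj (v i) * (if i = j then 1 else 0) * v j) = of_real (sqnorm_vec d v)"
    unfolding cinner_self[symmetric] cinner_def
    by (simp add: if_distrib[of "\<lambda>x. _ * x"] if_distrib[of "\<lambda>x. x * _"] mult.commute cong: if_cong)
  have adj_part: "(\<Sum>i<d. \<Sum>j<d. cnj (v i) * (\<Sum>k<e. cnj (L k i) * L k j) * v j)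
      = cinner e (mat_apply d L v) (mat_apply d L v)"
  proof -
    have "cinner e (mat_apply d L v) (mat_apply d L v)
       = (\<Sum>k<e. \<Sum>j<d. \<Sum>i<d. (L k j * v j) * (cnj (L k i) * cnj (v i)))"
      unfolding cinner_def mat_apply_def cnj_sum complex_cnj_mult sum_product ..
    also have "\<dots> = (\<Sum>j<d. \<Sum>i<d. \<Sum>k<e. (L k j * v j) * (cnj (L k i) * cnj (v i)))"
      by (subst sum.swap, subst (2) sum.swap, rule refl)
    also have "\<dots> = (\<Sum>i<d. \<Sum>j<d. \<Sum>k<e. (L k j * v j) * (cnj (L k i) * cnj (v i)))"
      by (rule sum.swap)
    also have "\<dots> = (\<Sum>i<d. \<Sum>j<d. cnj (v i) * (\<Sum>k<e. cnj (L k i) * L k j) * v j)"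
      by (simp add: sum_distrib_left sum_distrib_right algebra_simps)
    finally show ?thesis ..
  qed
  have "(\<Sum>i<d. \<Sum>j<d. cnj (v i) * id_minus_adj_mult e L i j * v j)
      = (\<Sum>i<d. \<Sum>j<d. cnj (v i) * (if i = j then 1 else 0) * v j)
        - (\<Sum>i<d. \<Sum>j<d. cnj (v i) * (\<Sum>k<e. cnj (L k i) * L k j) * v j)"
    unfolding id_minus_adj_mult_def by (simp add: algebra_simps sum_subtractf)
  then show ?thesis
    unfolding id_part adj_part cinner_self by simp
qed

lemma nonneg_def_id_minus_adj_mult_iff:
  "nonneg_def d (id_minus_adj_mult e L) \<longleftrightarrow> (\<forall>v. sqnorm_vec e (mat_apply d L v) \<le> sqnorm_vec d v)"
  unfolding nonneg_def_def Let_def id_minus_adj_mult_form by simp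

lemma contraction_defect_sum_of_squares:
  assumes "nonneg_def d (id_minus_adj_mult e L)"
  shows "\<exists>(K::nat) c. \<forall>v. sqnorm_vec d v - sqnorm_vec e (mat_apply d L v) = sqnorm_vec K (mat_apply d c v)"
proof -
  define M where "M = id_minus_adj_mult e L"
  have "hermitian_on {..<d} M"
    unfolding hermitian_on_def M_def id_minus_adj_mult_def by (simp add: cnj_sum mult.commute)
  moreover have "\<forall>v. 0 \<le> Re (herm_form {..<d} M v)"
    using assms unfolding nonneg_def_def Let_def herm_form_def M_def by blast
  ultimately obtain K :: nat and c
    where sos: "\<And>v. herm_form {..<d} M v = of_real (\<Sum>k<K. (cmod (\<Sum>j<d. c k j * v j))\<^sup>2)"
    using psd_herm_form_sum_of_squares[OF finite_lessThan] by blast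
  have "complex_of_real (sqnorm_vec d v - sqnorm_vec e (mat_apply d L v)) = herm_form {..<d} M v" for v
    unfolding herm_form_def M_def id_minus_adj_mult_form ..
  then have "sqnorm_vec d v - sqnorm_vec e (mat_apply d L v) = sqnorm_vec K (mat_apply d c v)" for v
    unfolding sos sqnorm_vec_def mat_apply_def of_real_eq_iff .
  then show ?thesis by blast
qed

section \<open>Holomorphic polynomial maps and their tensor products\<close>

lemma hol_poly_of_reindexed_sum:
  fixes f :: "complex^'n \<Rightarrow> complex"
  assumes I: "finite I" and f: "\<And>z. f z = (\<Sum>i\<in>I. c i * monom z (e i))"
  shows "hol_poly f"
  unfolding hol_poly_def
proof (intro exI conjI allI)
  show "finite (e ` I)" using I by simp
  fix z
  have "f z = (\<Sum>\<gamma>\<in>e ` I. \<Sum>i\<in>{i\<in>I. e i = \<gamma>}. c i * monom z (e i))"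
    unfolding f by (rule sum.image_gen[OF I])
  also have "\<dots> = (\<Sum>\<gamma>\<in>e ` I. (\<Sum>i\<in>{i\<in>I. e i = \<gamma>}. c i) * monom z \<gamma>)"
    unfolding sum_distrib_right by (intro sum.cong refl) auto
  finally show "f z = (\<Sum>\<gamma>\<in>e ` I. (\<lambda>\<gamma>. \<Sum>i\<in>{i\<in>I. e i = \<gamma>}. c i) \<gamma> * monom z \<gamma>)" by simp
qed

lemma monom_add: "monom z (\<alpha> + \<beta>) = monom z \<alpha> * monom z \<beta>"
  unfolding monom_def by (simp add: power_add prod.distrib)

lemma hol_poly_mult:
  fixes f g :: "complex^'n \<Rightarrow> complex"
  assumes "hol_poly f" "hol_poly g"
  shows "hol_poly (\<lambda>z. f z * g z)"
proof -
  obtain A a where A: "finite A" and f: "\<And>z. f z = (\<Sum>\<alpha>\<in>A. a \<alpha> * monom z \<alpha>)"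
    using assms(1) unfolding hol_poly_def by blast
  obtain B b where B: "finite B" and g: "\<And>z. g z = (\<Sum>\<beta>\<in>B. b \<beta> * monom z \<beta>)"
    using assms(2) unfolding hol_poly_def by blast
  show ?thesis
  proof (rule hol_poly_of_reindexed_sum[where I = "A \<times> B" and c = "\<lambda>(\<alpha>, \<beta>). a \<alpha> * b \<beta>"
        and e = "\<lambda>(\<alpha>, \<beta>). \<alpha> + \<beta>"])
    show "finite (A \<times> B)" using A B by simp
    fix z
    have "f z * g z = (\<Sum>(\<alpha>, \<beta>)\<in>A \<times> B. (a \<alpha> * monom z \<alpha>) * (b \<beta> * monom z \<beta>))"
      unfolding f g sum_product sum.cartesian_product ..
    then show "f z * g z = (\<Sum>i\<in>A \<times> B. (case i of (\<alpha>, \<beta>) \<Rightarrow> a \<alpha> * b \<beta>) * monom z (case i of (\<alpha>, \<beta>) \<Rightarrow> \<alpha> + \<beta>))"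
      by (simp add: monom_add split_def algebra_simps)
  qed
qed

lemma hol_poly_scale:
  fixes f :: "complex^'n \<Rightarrow> complex"
  assumes "hol_poly f"
  shows "hol_poly (\<lambda>z. c * f z)"
proof -
  obtain A a where A: "finite A" and f: "\<And>z. f z = (\<Sum>\<alpha>\<in>A. a \<alpha> * monom z \<alpha>)"
    using assms unfolding hol_poly_def by blast
  show ?thesis
    by (rule hol_poly_of_reindexed_sum[where c = "\<lambda>\<alpha>. c * a \<alpha>" and e = "\<lambda>\<alpha>. \<alpha>", OF A])
      (simp add: f sum_distrib_left mult.assoc)
qed

lemma hol_poly_add:
  fixes f g :: "complex^'n \<Rightarrow> complex"
  assumes "hol_poly f" "hol_poly g"
  shows "hol_poly (\<lambda>z. f z + g z)"
proof -
  obtain A a where A: "finite A" and f: "\<And>z. f z = (\<Sum>\<alpha>\<in>A. a \<alpha> * monom z \<alpha>)"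
    using assms(1) unfolding hol_poly_def by blast
  obtain B b where B: "finite B" and g: "\<And>z. g z = (\<Sum>\<beta>\<in>B. b \<beta> * monom z \<beta>)"
    using assms(2) unfolding hol_poly_def by blast
  show ?thesis
    by (rule hol_poly_of_reindexed_sum[where I = "A <+> B" and c = "case_sum a b" and e = "case_sum id id"])
      (use A B in \<open>simp_all add: sum.Plus f g\<close>)
qed

lemma hol_poly_sum:
  fixes f :: "nat \<Rightarrow> complex^'n \<Rightarrow> complex"
  shows "(\<And>j. j < d \<Longrightarrow> hol_poly (f j)) \<Longrightarrow> hol_poly (\<lambda>z. \<Sum>j<d. f j z)"
proof (induction d)
  case 0
  show ?case unfolding hol_poly_def by (intro exI[of _ "{}"]) simp
next
  case (Suc d)
  then show ?case by (simp add: hol_poly_add)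
qed

lemma hol_poly_map_common_support:
  fixes P :: "nat \<Rightarrow> complex^'n \<Rightarrow> complex"
  assumes "hol_poly_map p P"
  obtains U c where "finite U" and "\<And>i z. i < p \<Longrightarrow> P i z = (\<Sum>\<alpha>\<in>U. c i \<alpha> * monom z \<alpha>)"
proof -
  have "\<forall>i\<in>{..<p}. \<exists>Aa. finite (fst Aa) \<and> (\<forall>z. P i z = (\<Sum>\<alpha>\<in>fst Aa. snd Aa \<alpha> * monom z \<alpha>))"
    using assms unfolding hol_poly_map_def hol_poly_def by auto
  then obtain Aa where Aa: "\<And>i. i < p \<Longrightarrow> finite (fst (Aa i)) \<and> (\<forall>z. P i z = (\<Sum>\<alpha>\<in>fst (Aa i). snd (Aa i) \<alpha> * monom z \<alpha>))"
    by (metis bchoice lessThan_iff)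
  define U where "U = (\<Union>i<p. fst (Aa i))"
  define c where "c i \<alpha> = (if \<alpha> \<in> fst (Aa i) then snd (Aa i) \<alpha> else 0)" for i \<alpha>
  have "finite U" using Aa unfolding U_def by auto
  moreover have "P i z = (\<Sum>\<alpha>\<in>U. c i \<alpha> * monom z \<alpha>)" if "i < p" for i z
  proof -
    have "fst (Aa i) \<subseteq> U" using that unfolding U_def by auto
    then show ?thesis
      using Aa[OF that] \<open>finite U\<close> unfolding c_def by (simp add: if_distrib[of "\<lambda>x. x * _"] sum.If_cases Int_absorb1)
  qed
  ultimately show ?thesis by (rule that)
qed

lemma herm_sym_poly_weighted_sqnorm:
  fixes Q :: "nat \<Rightarrow> complex^'n \<Rightarrow> complex" and w :: "nat \<Rightarrow> real"
  assumes "hol_poly_map k Q"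
  shows "herm_sym_poly (\<lambda>z. \<Sum>i<k. w i * (cmod (Q i z))\<^sup>2)"
proof -
  obtain U c where U: "finite U" and Q: "\<And>i z. i < k \<Longrightarrow> Q i z = (\<Sum>\<alpha>\<in>U. c i \<alpha> * monom z \<alpha>)"
    using hol_poly_map_common_support[OF assms] by blast
  define C where "C \<alpha>\<beta> = (\<Sum>i<k. of_real (w i) * c i (fst \<alpha>\<beta>) * cnj (c i (snd \<alpha>\<beta>)))" for \<alpha>\<beta>
  have square: "of_real ((cmod (Q i z))\<^sup>2)
      = (\<Sum>\<alpha>\<in>U. \<Sum>\<beta>\<in>U. c i \<alpha> * cnj (c i \<beta>) * monom z \<alpha> * cnj (monom z \<beta>))" if "i < k" for i z
    unfolding complex_norm_square Q[OF that] cnj_sum sum_product by (simp add: algebra_simps)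
  show ?thesis unfolding herm_sym_poly_def
  proof (intro exI conjI allI)
    show "finite (U \<times> U)" using U by simp
    show "C (\<beta>, \<alpha>) = cnj (C (\<alpha>, \<beta>))" for \<alpha> \<beta>
      unfolding C_def by (simp add: cnj_sum mult.commute mult.left_commute)
    fix z
    have "complex_of_real (\<Sum>i<k. w i * (cmod (Q i z))\<^sup>2)
        = (\<Sum>i<k. of_real (w i) * of_real ((cmod (Q i z))\<^sup>2))"
      unfolding of_real_sum of_real_mult ..
    also have "\<dots> = (\<Sum>i<k. \<Sum>\<alpha>\<in>U. \<Sum>\<beta>\<in>U. of_real (w i) * c i \<alpha> * cnj (c i \<beta>) * monom z \<alpha> * cnj (monom z \<beta>))"
    proof (rule sum.cong[OF refl])
      fix i assume "i \<in> {..<k}"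
      then show "of_real (w i) * of_real ((cmod (Q i z))\<^sup>2)
          = (\<Sum>\<alpha>\<in>U. \<Sum>\<beta>\<in>U. of_real (w i) * c i \<alpha> * cnj (c i \<beta>) * monom z \<alpha> * cnj (monom z \<beta>))"
        by (simp only: square lessThan_iff sum_distrib_left mult.assoc)
    qed
    also have "\<dots> = (\<Sum>\<alpha>\<in>U. \<Sum>\<beta>\<in>U. C (\<alpha>, \<beta>) * monom z \<alpha> * cnj (monom z \<beta>))"
      unfolding C_def sum_distrib_right by (subst sum.swap, subst (2) sum.swap) simp
    finally show "complex_of_real (\<Sum>i<k. w i * (cmod (Q i z))\<^sup>2)
        = (\<Sum>(\<alpha>, \<beta>)\<in>U \<times> U. C (\<alpha>, \<beta>) * monom z \<alpha> * cnj (monom z \<beta>))"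
      by (simp add: sum.cartesian_product)
  qed
qed

lemma herm_sym_poly_sqnorm_diff:
  fixes P N :: "nat \<Rightarrow> complex^'n \<Rightarrow> complex"
  assumes "hol_poly_map p P" "hol_poly_map q N"
  shows "herm_sym_poly (\<lambda>z. sqnorm p P z - sqnorm q N z)"
proof -
  define Q where "Q i = (if i < p then P i else N (i - p))" for i
  define w :: "nat \<Rightarrow> real" where "w i = (if i < p then 1 else -1)" for i
  have "hol_poly_map (p + q) Q"
    using assms unfolding hol_poly_map_def Q_def by auto
  moreover have "(\<Sum>i<p + q. w i * (cmod (Q i z))\<^sup>2) = sqnorm p P z - sqnorm q N z" for z
    unfolding sqnorm_def by (induction q) (simp_all add: Q_def w_def)
  ultimately show ?thesis using herm_sym_poly_weighted_sqnorm[of "p + q" Q w] by simp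
qed

lemma div_mod_less_of_less_mult:
  fixes j a p :: nat
  assumes "j < a * p"
  shows "j div p < a" "j mod p < p"
proof -
  have "p > 0" using assms by (cases "p = 0") auto
  then show "j div p < a" "j mod p < p" using assms by (simp_all add: div_less_iff_less_mult)
qed

lemma sum_lessThan_mult_div_mod:
  fixes g :: "nat \<Rightarrow> nat \<Rightarrow> 'a::comm_monoid_add"
  shows "(\<Sum>m<a * p. g (m div p) (m mod p)) = (\<Sum>i<a. \<Sum>j<p. g i j)"
proof -
  have "(\<Sum>m<a * p. g (m div p) (m mod p)) = (\<Sum>(i, j)\<in>{..<a} \<times> {..<p}. g i j)"
  proof (rule sum.reindex_bij_witness[where i = "\<lambda>(i, j). i * p + j" and j = "\<lambda>m. (m div p, m mod p)"])
    fix m assume "m \<in> {..<a * p}"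
    then show "(m div p, m mod p) \<in> {..<a} \<times> {..<p}"
      using div_mod_less_of_less_mult by auto
  next
    fix ij assume "ij \<in> {..<a} \<times> {..<p}"
    moreover have "i * p + j < a * p" if "i < a" "j < p" for i j
    proof -
      have "i * p + j < Suc i * p" using \<open>j < p\<close> by simp
      also have "\<dots> \<le> a * p" using \<open>i < a\<close> by (intro mult_right_mono) auto
      finally show ?thesis .
    qed
    ultimately show "(case ij of (i, j) \<Rightarrow> i * p + j) \<in> {..<a * p}"
      and "((case ij of (i, j) \<Rightarrow> i * p + j) div p, (case ij of (i, j) \<Rightarrow> i * p + j) mod p) = ij"
      by auto
  qed auto
  then show ?thesis by (simp add: sum.cartesian_product)
qed

lemma sqnorm_tensor_map: "sqnorm (a * p) (tensor_map p B P) z = sqnorm a B z * sqnorm p P z"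
  unfolding sqnorm_def tensor_map_def sum_product
  using sum_lessThan_mult_div_mod[where g = "\<lambda>i j. (cmod (B i z * P j z))\<^sup>2"]
  by (simp add: norm_mult power_mult_distrib)

lemma hol_poly_map_tensor_map:
  assumes "hol_poly_map a B" "hol_poly_map p P"
  shows "hol_poly_map (a * p) (tensor_map p B P)"
  unfolding hol_poly_map_def tensor_map_def
proof (intro allI impI)
  fix m assume "m < a * p"
  then have "m div p < a" "m mod p < p" by (rule div_mod_less_of_less_mult)+
  then show "hol_poly (\<lambda>z. B (m div p) z * P (m mod p) z)"
    using assms unfolding hol_poly_map_def by (intro hol_poly_mult) auto
qed

lemma hol_poly_map_poly_on_lines: "hol_poly_map k F \<Longrightarrow> i < k \<Longrightarrow> poly_on_lines (F i)"
  unfolding hol_poly_map_def by (simp add: hol_poly_imp_poly_on_lines)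

lemma sqnorm_pos_if_component_nonzero: "i < l \<Longrightarrow> G i z \<noteq> 0 \<Longrightarrow> 0 < sqnorm l G z"
  unfolding sqnorm_def by (rule sum_pos2[of "{..<l}" i]) auto

lemma in_Q_imp_cleared_identity:
  fixes P N :: "nat \<Rightarrow> complex^'n \<Rightarrow> complex"
  assumes P: "hol_poly_map p P" and N: "hol_poly_map q N"
    and "in_Q (\<lambda>z. sqnorm p P z - sqnorm q N z)"
  obtains k F l G where "hol_poly_map k F" "hol_poly_map l G" "\<exists>z i. i < l \<and> G i z \<noteq> 0"
    "\<And>z. sqnorm l G z * (sqnorm p P z - sqnorm q N z) = sqnorm k F z"
proof -
  obtain k F l G where F: "hol_poly_map k F" and G: "hol_poly_map l G"
    and G_nz: "\<exists>z i. i < l \<and> G i z \<noteq> 0"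
    and quot: "\<And>z. sqnorm l G z \<noteq> 0 \<Longrightarrow> sqnorm p P z - sqnorm q N z = sqnorm k F z / sqnorm l G z"
    using assms(3) unfolding in_Q_def by blast
  obtain w i0 where i0: "i0 < l" and w: "G i0 w \<noteq> 0" using G_nz by blast
  have "sqnorm l G z * (sqnorm p P z - sqnorm q N z) - sqnorm k F z = 0" for z
  proof (rule eq_0_if_eq_0_off_zeros[where g = "G i0" and w = w])
    show "poly_on_lines (G i0)" by (rule hol_poly_map_poly_on_lines[OF G i0])
    show "continuous_on UNIV (\<lambda>s. sqnorm l G (line_point y x s)
        * (sqnorm p P (line_point y x s) - sqnorm q N (line_point y x s)) - sqnorm k F (line_point y x s))"
      for y x
      using F G P N by (intro continuous_on_diff continuous_on_mult sqnorm_continuous_on_line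
          hol_poly_map_poly_on_lines)
  next
    fix z assume "G i0 z \<noteq> 0"
    then have "sqnorm l G z \<noteq> 0" using sqnorm_pos_if_component_nonzero[OF i0] by fastforce
    then show "sqnorm l G z * (sqnorm p P z - sqnorm q N z) - sqnorm k F z = 0"
      using quot[of z] by simp
  qed (rule w)
  then show ?thesis by (intro that[OF F G G_nz]) simp
qed

lemma in_Q_imp_contraction:
  fixes P N :: "nat \<Rightarrow> complex^'n \<Rightarrow> complex"
  assumes P: "hol_poly_map p P" and N: "hol_poly_map q N"
    and "in_Q (\<lambda>z. sqnorm p P z - sqnorm q N z)"
  shows "\<exists>a B L. hol_poly_map a B \<and> (\<exists>z i. i < a \<and> B i z \<noteq> 0) \<and>
       nonneg_def (a * p) (id_minus_adj_mult (a * q) L) \<and>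
       (\<forall>z. \<forall>i < a * q. tensor_map q B N i z = mat_apply (a * p) L (\<lambda>j. tensor_map p B P j z) i)"
proof -
  obtain k F l G where F: "hol_poly_map k F" and G: "hol_poly_map l G"
    and G_nz: "\<exists>z i. i < l \<and> G i z \<noteq> 0"
    and cleared: "\<And>z. sqnorm l G z * (sqnorm p P z - sqnorm q N z) = sqnorm k F z"
    by (rule in_Q_imp_cleared_identity[OF assms]) blast
  have "sqnorm (l * p) (tensor_map p G P) z = sqnorm (l * q) (tensor_map q G N) z + sqnorm k F z" for z
    using cleared[of z] unfolding sqnorm_tensor_map by (simp add: algebra_simps)
  then obtain L where "\<forall>z. \<forall>i<l * q. tensor_map q G N i z = mat_apply (l * p) L (\<lambda>j. tensor_map p G P j z) i"
    and "\<forall>v. sqnorm_vec (l * q) (mat_apply (l * p) L v) \<le> sqnorm_vec (l * p) v"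
    using contraction_of_sqnorm_identity[where A = "tensor_map p G P" and C = "tensor_map q G N" and F = F,
        OF hol_poly_map_poly_on_lines[OF hol_poly_map_tensor_map[OF G P]]
        hol_poly_map_poly_on_lines[OF hol_poly_map_tensor_map[OF G N]]
        hol_poly_map_poly_on_lines[OF F]]
    by blast
  then show ?thesis
    using G G_nz unfolding nonneg_def_id_minus_adj_mult_iff by blast
qed

lemma contraction_imp_in_Q:
  fixes P N B :: "nat \<Rightarrow> complex^'n \<Rightarrow> complex"
  assumes P: "hol_poly_map p P" and N: "hol_poly_map q N"
    and B: "hol_poly_map a B" and B_nz: "\<exists>z i. i < a \<and> B i z \<noteq> 0"
    and L: "nonneg_def (a * p) (id_minus_adj_mult (a * q) L)"
    and factor: "\<forall>z. \<forall>i < a * q. tensor_map q B N i z = mat_apply (a * p) L (\<lambda>j. tensor_map p B P j z) i"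
  shows "in_Q (\<lambda>z. sqnorm p P z - sqnorm q N z)"
proof -
  obtain K :: nat and c where c: "\<And>v. sqnorm_vec (a * p) v - sqnorm_vec (a * q) (mat_apply (a * p) L v)
      = sqnorm_vec K (mat_apply (a * p) c v)"
    using contraction_defect_sum_of_squares[OF L] by blast
  define F where "F k z = mat_apply (a * p) c (\<lambda>j. tensor_map p B P j z) k" for k z
  have cleared: "sqnorm K F z = sqnorm a B z * (sqnorm p P z - sqnorm q N z)" for z
  proof -
    define v where "v = (\<lambda>j. tensor_map p B P j z)"
    have "sqnorm_vec (a * q) (mat_apply (a * p) L v) = sqnorm (a * q) (tensor_map q B N) z"
      unfolding sqnorm_eq_sqnorm_vec by (rule sqnorm_vec_cong) (simp add: factor v_def)
    moreover have "sqnorm_vec (a * p) v = sqnorm (a * p) (tensor_map p B P) z"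
      unfolding sqnorm_eq_sqnorm_vec v_def ..
    ultimately show ?thesis
      using c[of v] unfolding F_def sqnorm_eq_sqnorm_vec[of K] v_def sqnorm_tensor_map
      by (simp add: right_diff_distrib)
  qed
  then have "\<forall>z. sqnorm a B z \<noteq> 0 \<longrightarrow> sqnorm p P z - sqnorm q N z = sqnorm K F z / sqnorm a B z"
    by simp
  moreover have "hol_poly_map K F"
    using hol_poly_map_tensor_map[OF B P]
    unfolding hol_poly_map_def F_def mat_apply_def by (intro allI impI hol_poly_sum hol_poly_scale) auto
  ultimately show ?thesis
    unfolding in_Q_def using herm_sym_poly_sqnorm_diff[OF P N] B B_nz by blast
qed

theorem proposition3p1:
  fixes P N :: "nat \<Rightarrow> complex^'n \<Rightarrow> complex" and p q :: nat
  assumes "hol_poly_map p P" and "hol_poly_map q N"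
  shows "in_Q (\<lambda>z. sqnorm p P z - sqnorm q N z) \<longleftrightarrow>
    (\<exists>a B L. hol_poly_map a B \<and> (\<exists>z i. i < a \<and> B i z \<noteq> 0) \<and>
       nonneg_def (a * p) (id_minus_adj_mult (a * q) L) \<and>
       (\<forall>z. \<forall>i < a * q. tensor_map q B N i z = mat_apply (a * p) L (\<lambda>j. tensor_map p B P j z) i))"
  using in_Q_imp_contraction[OF assms] contraction_imp_in_Q[OF assms] by blast

end
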